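(* Let $k\geq 1$ and let $\zeta_1,\dots,\zeta_k\in(0,1)$ be real numbers such that $1,\zeta_1,\dots,\zeta_k$ are linearly independent over $\mathbb{Q}$. For every integer $s\geq 2$, with $a_n^{i,(s)}$ and $b_n^{(s)}$ as in the context, $$\min_{1\le i\le k}\liminf_{n\to\infty}\left(\frac{a^{i,(s)}_{n+1}}{a^{i,(s)}_n}\right)^{1/k}\ \leq\ \limsup_{n\to\infty}\frac{b^{(s)}_{n+1}}{b^{(s)}_n}\ \leq\ \min_{1\le i\le k}\limsup_{n\to\infty}\frac{a^{i,(s)}_{n+1}}{a^{i,(s)}_n}.$$
   Context: For an integer $s\ge2$, let $a_1^{i,(s)}<a_2^{i,(s)}<\cdots$ be the positions (after the point) of the nonzero digits in the base-$s$ expansion of $\zeta_i$, i.e. $\zeta_i=\sum_{n\ge1}\alpha_{n,i}s^{-a_n^{i,(s)}}$ with digits $0<\alpha_{n,i}\le s-1$. Let $(b_n^{(s)})_{n\ge1}$ be the increasing enumeration of the set $\{a_n^{i,(s)}:1\le i\le k,\ n\ge1\}$. *)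

theory Defs
  imports "HOL-Analysis.Analysis" "HOL-Library.Extended_Real"
begin

text \<open>The n-th digit (n \<ge> 1, after the point) of the base-s expansion of x.
  For irrational x in (0,1) the expansion is unique and this is it.\<close>
definition digit :: "nat \<Rightarrow> real \<Rightarrow> nat \<Rightarrow> int" where
  "digit s x n = \<lfloor>real s ^ n * x\<rfloor> mod int s"

definition nzpos :: "nat \<Rightarrow> real \<Rightarrow> nat set" where
  "nzpos s x = {n. n \<ge> 1 \<and> digit s x n \<noteq> 0}"

text \<open>a_n^{i,(s)}: increasing enumeration (0-indexed: a s x 0 is the first position).\<close>
definition apos :: "nat \<Rightarrow> real \<Rightarrow> nat \<Rightarrow> nat" where
  "apos s x = enumerate (nzpos s x)"

definition bpos :: "nat \<Rightarrow> nat \<Rightarrow> (nat \<Rightarrow> real) \<Rightarrow> nat \<Rightarrow> nat" where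
  "bpos s k \<zeta> = enumerate (\<Union>i\<in>{1..k}. nzpos s (\<zeta> i))"

end

theory Submission
  imports Defs
begin

text \<open>
  Linear independence makes every \<open>\<zeta> i\<close> irrational, so it has infinitely many nonzero
  digits: the position sets \<open>A i\<close> and their union \<open>U\<close> are infinite.
  Upper bound: each gap \<open>[b n, b (n+1)]\<close> of \<open>U\<close> lies inside a gap \<open>[a m, a (m+1)]\<close> of \<open>A i\<close>,
  whence \<open>b (n+1) / b n \<le> a (m+1) / a m\<close>.
  Lower bound: among any \<open>k + 1\<close> consecutive elements \<open>b p < \<dots> < b (p+k)\<close> of \<open>U\<close> two lie in
  the same \<open>A i\<close>, so some ratio \<open>a (m+1) / a m\<close> is at most the \<open>k\<close>-th power of the largest of
  the intermediate ratios of \<open>U\<close>; by pigeonhole again, one index \<open>i\<close> serves infinitely often.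
\<close>

subsection \<open>Irrational numbers have infinitely many nonzero digits\<close>

lemma frac_mult_base_if_digit_zero:
  fixes s :: nat and z :: real
  assumes "s \<ge> 2" "\<lfloor>real s * z\<rfloor> mod int s = 0"
  shows "frac (real s * z) = real s * frac z"
proof -
  have split: "real s * z = of_int (int s * \<lfloor>z\<rfloor>) + real s * frac z"
    by (simp add: frac_def algebra_simps)
  have "0 \<le> \<lfloor>real s * frac z\<rfloor>" "\<lfloor>real s * frac z\<rfloor> < int s"
    using frac_lt_1[of z] assms(1) by (simp_all add: floor_less_iff)
  moreover have "\<lfloor>real s * z\<rfloor> = int s * \<lfloor>z\<rfloor> + \<lfloor>real s * frac z\<rfloor>"
    by (subst split, subst int_add_floor[symmetric]) simp
  ultimately have "\<lfloor>real s * frac z\<rfloor> = 0"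
    using assms(2) by (simp add: mod_pos_pos_trivial)
  then show ?thesis
    by (subst split, subst frac_add_of_int_left) (simp add: frac_eq floor_eq_iff)
qed

lemma frac_power_mult_if_digits_zero:
  fixes s N :: nat and x :: real
  assumes "s \<ge> 2" "\<forall>n>N. digit s x n = 0"
  shows "frac (real s ^ (N + j) * x) = real s ^ j * frac (real s ^ N * x)"
proof (induction j)
  case (Suc j)
  have "\<lfloor>real s * (real s ^ (N + j) * x)\<rfloor> mod int s = 0"
    using assms(2)[rule_format, of "Suc (N + j)"] by (simp add: digit_def mult.assoc)
  then have "frac (real s ^ (N + Suc j) * x) = real s * frac (real s ^ (N + j) * x)"
    using frac_mult_base_if_digit_zero[OF assms(1)] by (simp add: mult.assoc)
  then show ?case
    using Suc by simp
qed simp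

lemma Rats_if_digits_eventually_zero:
  fixes s N :: nat and x :: real
  assumes "s \<ge> 2" "\<forall>n>N. digit s x n = 0"
  shows "x \<in> \<rat>"
proof -
  define f where "f = frac (real s ^ N * x)"
  have "f = 0"
  proof (rule ccontr)
    assume "f \<noteq> 0"
    then have "f > 0"
      by (simp add: f_def order_less_le)
    obtain j where "1 / f < real s ^ j"
      using real_arch_pow[of "real s"] assms(1) by auto
    then have "1 < real s ^ j * f"
      using \<open>f > 0\<close> by (simp add: field_simps)
    moreover have "real s ^ j * f < 1"
      using frac_power_mult_if_digits_zero[OF assms, of j] frac_lt_1[of "real s ^ (N + j) * x"] by (simp add: f_def)
    ultimately show False
      by simp
  qed
  then have "x = of_int \<lfloor>real s ^ N * x\<rfloor> / real s ^ N"
    using assms(1) by (simp add: f_def frac_def field_simps)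
  also have "\<dots> \<in> \<rat>"
    by (intro Rats_divide Rats_of_int Rats_power) simp
  finally show ?thesis .
qed

lemma infinite_nzpos_if_irrational:
  fixes s :: nat and x :: real
  assumes "s \<ge> 2" "x \<notin> \<rat>"
  shows "infinite (nzpos s x)"
proof
  assume "finite (nzpos s x)"
  then obtain N where N: "\<forall>n\<in>nzpos s x. n \<le> N"
    using finite_nat_set_iff_bounded_le by blast
  have "\<forall>n>N. digit s x n = 0"
  proof (intro allI impI)
    fix n
    assume "N < n"
    then have "n \<notin> nzpos s x"
      using N by auto
    then show "digit s x n = 0"
      using \<open>N < n\<close> by (simp add: nzpos_def)
  qed
  then show False
    using Rats_if_digits_eventually_zero[OF assms(1)] assms(2) by blast
qed

lemma irrational_if_Rats_independent:
  fixes k :: nat and \<zeta> :: "nat \<Rightarrow> real"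
  assumes indep: "\<forall>c :: nat \<Rightarrow> real. (\<forall>i\<in>{0..k}. c i \<in> \<rat>) \<and> c 0 + (\<Sum>i=1..k. c i * \<zeta> i) = 0
            \<longrightarrow> (\<forall>i\<in>{0..k}. c i = 0)"
    and i: "i \<in> {1..k}"
  shows "\<zeta> i \<notin> \<rat>"
proof
  assume rat: "\<zeta> i \<in> \<rat>"
  define c where "c j = (if j = 0 then - \<zeta> i else if j = i then 1 else 0)" for j
  have "(\<Sum>j=1..k. c j * \<zeta> j) = (\<Sum>j=1..k. if j = i then \<zeta> i else 0)"
    by (rule sum.cong) (auto simp: c_def)
  then have "c 0 + (\<Sum>j=1..k. c j * \<zeta> j) = 0"
    using i by (simp add: c_def)
  moreover have "\<forall>j\<in>{0..k}. c j \<in> \<rat>"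
    using rat by (simp add: c_def)
  ultimately have "c i = 0"
    using indep i by auto
  then show False
    using i by (simp add: c_def)
qed

subsection \<open>Ratios of consecutive elements of an infinite set of naturals\<close>

definition enum_ratio :: "nat set \<Rightarrow> nat \<Rightarrow> real" where
  "enum_ratio S n = real (enumerate S (Suc n)) / real (enumerate S n)"

lemma enumerate_Suc_le:
  fixes S :: "nat set"
  assumes "infinite S" "y \<in> S" "enumerate S n < y"
  shows "enumerate S (Suc n) \<le> y"
  using assms by (simp add: enumerate_Suc'' Least_le)

lemma enumerate_gap_containing:
  fixes A :: "nat set"
  assumes "infinite A" "enumerate A M \<le> x"
  obtains m where "M \<le> m" "enumerate A m \<le> x" "x < enumerate A (Suc m)"
proof -
  have ex: "\<exists>q. x < enumerate A q"
    using le_enumerate[OF assms(1), of "Suc x"] by (intro exI[of _ "Suc x"]) simp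
  define q where "q = (LEAST q. x < enumerate A q)"
  have q: "x < enumerate A q"
    unfolding q_def using LeastI_ex[OF ex] .
  have "enumerate A M < enumerate A q"
    using q assms(2) by simp
  then have "M < q"
    using assms(1) by simp
  then obtain m where m: "q = Suc m" "M \<le> m"
    by (cases q) auto
  have "enumerate A m \<le> x"
    using not_less_Least[of m "\<lambda>q. x < enumerate A q"] m by (simp add: q_def)
  with m q show ?thesis
    using that by simp
qed

lemma enum_ratio_le_enum_ratio_subset:
  fixes A U :: "nat set"
  assumes "infinite A" "A \<subseteq> U" "0 \<notin> A" "enumerate A M \<le> enumerate U n"
  obtains m where "M \<le> m" "enum_ratio U n \<le> enum_ratio A m"
proof -
  have U: "infinite U"
    using assms(1,2) finite_subset by blast
  obtain m where m: "M \<le> m" "enumerate A m \<le> enumerate U n" "enumerate U n < enumerate A (Suc m)"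
    using enumerate_gap_containing[OF assms(1,4)] .
  have "enumerate U (Suc n) \<le> enumerate A (Suc m)"
    using enumerate_Suc_le[OF U] m(3) enumerate_in_set[OF assms(1)] assms(2) by blast
  moreover have "0 < enumerate A m"
    using enumerate_in_set[OF assms(1), of m] assms(3) by (auto intro: gr0I)
  ultimately have "real (enumerate U (Suc n)) / real (enumerate U n)
      \<le> real (enumerate A (Suc m)) / real (enumerate A m)"
    using m(2) by (intro frac_le) auto
  with m(1) show ?thesis
    using that by (simp add: enum_ratio_def)
qed

lemma power_mult_bound_if_ratios_le:
  fixes b :: "nat \<Rightarrow> real" and c :: real
  assumes "c \<ge> 0" "\<And>j. p \<le> j \<Longrightarrow> j < p + d \<Longrightarrow> b (Suc j) \<le> c * b j"
  shows "b (p + d) \<le> c ^ d * b p"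
  using assms(2)
proof (induction d)
  case (Suc d)
  then have "b (p + Suc d) \<le> c * b (p + d)"
    by simp
  also have "\<dots> \<le> c * (c ^ d * b p)"
    using Suc assms(1) by (intro mult_left_mono) auto
  finally show ?case
    by simp
qed simp

lemma two_in_same_part_among_consecutive:
  fixes A :: "'i \<Rightarrow> nat set"
  assumes "finite I" "infinite (\<Union>i\<in>I. A i)"
  obtains i p q where "i \<in> I" "n \<le> p" "p < q" "q \<le> n + card I"
    "enumerate (\<Union>i\<in>I. A i) p \<in> A i" "enumerate (\<Union>i\<in>I. A i) q \<in> A i"
proof -
  define part where "part p = (SOME i. i \<in> I \<and> enumerate (\<Union>i\<in>I. A i) p \<in> A i)" for p
  have part: "part p \<in> I \<and> enumerate (\<Union>i\<in>I. A i) p \<in> A (part p)" for p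
    unfolding part_def by (rule someI_ex) (use enumerate_in_set[OF assms(2), of p] in blast)
  have "\<not> inj_on part {n..n + card I}"
  proof
    assume "inj_on part {n..n + card I}"
    then have "card {n..n + card I} \<le> card I"
      using part assms(1) by (intro card_inj_on_le) auto
    then show False
      by simp
  qed
  then obtain p q where "p \<in> {n..n + card I}" "q \<in> {n..n + card I}" "p < q" "part p = part q"
    unfolding inj_on_def by (metis linorder_neqE_nat)
  then show ?thesis
    using that[of "part p" p q] part[of p] part[of q] by auto
qed

lemma enum_ratio_le_Max_enum_ratio_power:
  fixes A U :: "nat set"
  assumes "infinite U" "0 \<notin> U" "p < q"
    and "enumerate A m = enumerate U p" "enumerate A (Suc m) \<le> enumerate U q"
  shows "enum_ratio A m \<le> Max (enum_ratio U ` {p..<q}) ^ (q - p)"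
proof -
  let ?b = "\<lambda>t. real (enumerate U t)"
  define c where "c = Max (enum_ratio U ` {p..<q})"
  have b_pos: "0 < ?b t" for t
    using enumerate_in_set[OF assms(1), of t] assms(2) by (auto intro: gr0I)
  have ratios_le: "?b (Suc t) \<le> c * ?b t" if "t \<in> {p..<q}" for t
  proof -
    have "enum_ratio U t \<le> c"
      unfolding c_def using that by (intro Max_ge) auto
    then show ?thesis
      using b_pos[of t] by (simp add: enum_ratio_def divide_le_eq)
  qed
  have "0 \<le> enum_ratio U p"
    by (simp add: enum_ratio_def)
  also have "\<dots> \<le> c"
    unfolding c_def using assms(3) by (intro Max_ge) auto
  finally have "?b q \<le> c ^ (q - p) * ?b p"
    using power_mult_bound_if_ratios_le[of c p "q - p" ?b] ratios_le assms(3) by simp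
  then show ?thesis
    using assms(4,5) b_pos[of p] by (simp add: c_def enum_ratio_def divide_le_eq)
qed

lemma enum_ratio_root_le_enum_ratio_union:
  fixes A :: "'i \<Rightarrow> nat set" and I :: "'i set"
  defines "U \<equiv> \<Union>i\<in>I. A i"
  assumes "finite I" "I \<noteq> {}" "\<forall>i\<in>I. infinite (A i)" "0 \<notin> U"
  shows "\<exists>i\<in>I. \<exists>m j. n \<le> enumerate (A i) m \<and> n \<le> j \<and>
           enum_ratio (A i) m powr (1 / real (card I)) \<le> enum_ratio U j"
proof -
  obtain i0 where "i0 \<in> I"
    using assms(3) by blast
  then have U: "infinite U"
    using assms(4) infinite_super[of "A i0" U] unfolding U_def by blast
  obtain i p q where i: "i \<in> I" and pq: "n \<le> p" "p < q" "q \<le> n + card I"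
    and in_A: "enumerate U p \<in> A i" "enumerate U q \<in> A i"
    using two_in_same_part_among_consecutive[OF assms(2) U[unfolded U_def]] unfolding U_def by blast
  have A: "infinite (A i)"
    using assms(4) i by blast
  obtain m where m: "enumerate (A i) m = enumerate U p"
    using enumerate_Ex[OF A in_A(1)] by blast
  have "enumerate (A i) (Suc m) \<le> enumerate U q"
    using enumerate_Suc_le[OF A in_A(2)] m pq(2) U by simp
  define c where "c = Max (enum_ratio U ` {p..<q})"
  obtain j where j: "j \<in> {p..<q}" "c = enum_ratio U j"
    using Max_in[of "enum_ratio U ` {p..<q}"] pq(2) c_def by fastforce
  have "0 < enumerate U j"
    using enumerate_in_set[OF U, of j] assms(5) by (auto intro: gr0I)
  then have "1 \<le> c"
    using j enumerate_step[OF U, of j] by (simp add: enum_ratio_def)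
  have "enum_ratio (A i) m \<le> c ^ (q - p)"
    unfolding c_def by (rule enum_ratio_le_Max_enum_ratio_power) fact+
  also have "\<dots> \<le> c ^ card I"
    using \<open>1 \<le> c\<close> pq by (intro power_increasing) auto
  finally have "enum_ratio (A i) m powr (1 / real (card I)) \<le> (c ^ card I) powr (1 / real (card I))"
    by (intro powr_mono2) (auto simp: enum_ratio_def)
  also have "\<dots> = c"
    using \<open>1 \<le> c\<close> assms(2,3) by (simp add: powr_realpow[symmetric] powr_powr)
  finally show ?thesis
    using i m pq j le_enumerate[OF U, of p] by (intro bexI[of _ i] exI[of _ m] exI[of _ j]) auto
qed

subsection \<open>Comparing upper and lower limits\<close>

lemma limsup_le_limsup_if_dominated:
  fixes f g :: "nat \<Rightarrow> ereal"
  assumes "\<forall>M. \<exists>N. \<forall>n\<ge>N. \<exists>m\<ge>M. f n \<le> g m"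
  shows "limsup f \<le> limsup g"
  unfolding limsup_INF_SUP
proof (rule INF_greatest)
  fix M :: nat
  obtain N where N: "\<forall>n\<ge>N. \<exists>m\<ge>M. f n \<le> g m"
    using assms by blast
  have "(SUP n\<in>{N..}. f n) \<le> (SUP m\<in>{M..}. g m)"
    using N by (intro SUP_least) (force intro: SUP_upper2)
  then show "(INF n. SUP m\<in>{n..}. f m) \<le> (SUP m\<in>{M..}. g m)"
    by (rule INF_lower2[OF UNIV_I])
qed

lemma liminf_le_limsup_if_frequently_dominated:
  fixes f g :: "nat \<Rightarrow> ereal"
  assumes "\<forall>M N. \<exists>n\<ge>N. \<exists>m\<ge>M. g m \<le> f n"
  shows "liminf g \<le> limsup f"
  unfolding liminf_SUP_INF limsup_INF_SUP
proof (rule SUP_least, rule INF_greatest)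
  fix M N :: nat
  obtain n m where "n \<ge> N" "m \<ge> M" "g m \<le> f n"
    using assms by blast
  then have "(INF m\<in>{M..}. g m) \<le> f n"
    by (auto intro: INF_lower2)
  also have "\<dots> \<le> (SUP n\<in>{N..}. f n)"
    using \<open>n \<ge> N\<close> by (auto intro: SUP_upper2)
  finally show "(INF m\<in>{M..}. g m) \<le> (SUP n\<in>{N..}. f n)" .
qed

lemma limsup_enum_ratio_le_subset:
  fixes A U :: "nat set"
  assumes "infinite A" "A \<subseteq> U" "0 \<notin> A"
  shows "limsup (\<lambda>n. ereal (enum_ratio U n)) \<le> limsup (\<lambda>n. ereal (enum_ratio A n))"
proof (rule limsup_le_limsup_if_dominated, intro allI)
  have U: "infinite U"
    using assms(1,2) finite_subset by blast
  fix M
  show "\<exists>N. \<forall>n\<ge>N. \<exists>m\<ge>M. ereal (enum_ratio U n) \<le> ereal (enum_ratio A m)"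
  proof (rule exI[of _ "enumerate A M"], intro allI impI)
    fix n
    assume "enumerate A M \<le> n"
    then have "enumerate A M \<le> enumerate U n"
      using le_enumerate[OF U] order_trans by blast
    then obtain m where "M \<le> m" "enum_ratio U n \<le> enum_ratio A m"
      using enum_ratio_le_enum_ratio_subset[OF assms] by blast
    then show "\<exists>m\<ge>M. ereal (enum_ratio U n) \<le> ereal (enum_ratio A m)"
      by auto
  qed
qed

lemma liminf_enum_ratio_root_le_limsup_union:
  fixes A :: "'i \<Rightarrow> nat set" and I :: "'i set"
  defines "U \<equiv> \<Union>i\<in>I. A i"
  assumes "finite I" "I \<noteq> {}" "\<forall>i\<in>I. infinite (A i)" "0 \<notin> U"
  shows "\<exists>i\<in>I. liminf (\<lambda>m. ereal (enum_ratio (A i) m powr (1 / real (card I))))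
                \<le> limsup (\<lambda>j. ereal (enum_ratio U j))"
proof -
  define good where "good i n \<longleftrightarrow> (\<exists>m j. n \<le> enumerate (A i) m \<and> n \<le> j \<and>
           enum_ratio (A i) m powr (1 / real (card I)) \<le> enum_ratio U j)" for i n
  have "\<exists>\<^sub>F n in sequentially. \<exists>i\<in>I. good i n"
    using enum_ratio_root_le_enum_ratio_union[OF assms(2-5)[unfolded U_def]]
    unfolding good_def U_def by (intro eventually_frequently always_eventually) auto
  then have "\<exists>i\<in>I. \<exists>\<^sub>F n in sequentially. good i n"
    by (rule frequently_bex_finite[OF assms(2)])
  then obtain i where i: "i \<in> I" "\<forall>N. \<exists>n\<ge>N. good i n"
    unfolding frequently_sequentially by blast
  have "liminf (\<lambda>m. ereal (enum_ratio (A i) m powr (1 / real (card I))))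
      \<le> limsup (\<lambda>j. ereal (enum_ratio U j))"
  proof (rule liminf_le_limsup_if_frequently_dominated, intro allI)
    fix M N
    obtain n m j where "n \<ge> max N (Suc (enumerate (A i) M))" "n \<le> enumerate (A i) m" "n \<le> j"
      "enum_ratio (A i) m powr (1 / real (card I)) \<le> enum_ratio U j"
      using i(2) unfolding good_def by blast
    moreover have "M \<le> m"
    proof -
      have "enumerate (A i) M < enumerate (A i) m"
        using calculation by simp
      then show ?thesis
        using assms(4) i(1) by simp
    qed
    ultimately show "\<exists>j\<ge>N. \<exists>m\<ge>M. ereal (enum_ratio (A i) m powr (1 / real (card I)))
        \<le> ereal (enum_ratio U j)"
      by (intro exI[of _ j] conjI exI[of _ m]) auto
  qed
  with i(1) show ?thesis
    by blast
qed

theorem lemma2p4: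
  fixes k s :: nat and \<zeta> :: "nat \<Rightarrow> real"
  assumes "k \<ge> 1"
    and "\<forall>i\<in>{1..k}. 0 < \<zeta> i \<and> \<zeta> i < 1"
    and "\<forall>c :: nat \<Rightarrow> real. (\<forall>i\<in>{0..k}. c i \<in> \<rat>) \<and> c 0 + (\<Sum>i=1..k. c i * \<zeta> i) = 0
            \<longrightarrow> (\<forall>i\<in>{0..k}. c i = 0)"
    and "s \<ge> 2"
  shows "Min ((\<lambda>i. liminf (\<lambda>n. ereal ((real (apos s (\<zeta> i) (Suc n)) / real (apos s (\<zeta> i) n)) powr (1 / real k)))) ` {1..k})
           \<le> limsup (\<lambda>n. ereal (real (bpos s k \<zeta> (Suc n)) / real (bpos s k \<zeta> n)))
       \<and> limsup (\<lambda>n. ereal (real (bpos s k \<zeta> (Suc n)) / real (bpos s k \<zeta> n)))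
           \<le> Min ((\<lambda>i. limsup (\<lambda>n. ereal (real (apos s (\<zeta> i) (Suc n)) / real (apos s (\<zeta> i) n)))) ` {1..k})"
proof -
  define A where "A i = nzpos s (\<zeta> i)" for i
  define U where "U = (\<Union>i\<in>{1..k}. A i)"
  have inf: "\<forall>i\<in>{1..k}. infinite (A i)"
    using infinite_nzpos_if_irrational[OF assms(4)] irrational_if_Rats_independent[OF assms(3)]
    unfolding A_def by blast
  have zero: "0 \<notin> U"
    by (auto simp: U_def A_def nzpos_def)
  have I: "finite {1..k}" "{1..k} \<noteq> {}" "card {1..k} = k"
    using assms(1) by auto
  have ratio_eqs: "real (apos s (\<zeta> i) (Suc n)) / real (apos s (\<zeta> i) n) = enum_ratio (A i) n"
    "real (bpos s k \<zeta> (Suc n)) / real (bpos s k \<zeta> n) = enum_ratio U n" for i n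
    by (simp_all add: apos_def bpos_def U_def A_def enum_ratio_def)
  obtain i where "i \<in> {1..k}"
    "liminf (\<lambda>m. ereal (enum_ratio (A i) m powr (1 / real k))) \<le> limsup (\<lambda>j. ereal (enum_ratio U j))"
    using liminf_enum_ratio_root_le_limsup_union[OF I(1,2) inf zero[unfolded U_def]]
    unfolding I(3) U_def by blast
  then have lower: "Min ((\<lambda>i. liminf (\<lambda>m. ereal (enum_ratio (A i) m powr (1 / real k)))) ` {1..k})
      \<le> limsup (\<lambda>j. ereal (enum_ratio U j))"
    using I(1,2) by (subst Min_le_iff) auto
  have "limsup (\<lambda>j. ereal (enum_ratio U j)) \<le> limsup (\<lambda>n. ereal (enum_ratio (A i) n))"
    if "i \<in> {1..k}" for i
    using limsup_enum_ratio_le_subset[of "A i" U] inf zero that unfolding U_def by blast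
  then have upper: "limsup (\<lambda>j. ereal (enum_ratio U j))
      \<le> Min ((\<lambda>i. limsup (\<lambda>n. ereal (enum_ratio (A i) n))) ` {1..k})"
    using I(1,2) by (intro Min.boundedI) auto
  show ?thesis
    unfolding ratio_eqs using lower upper ..
qed

end
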